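(* Let $R$ be a maximal subring of a ring $T$ such that the conductor $(R:T)$ is a prime ideal of $T$ which is not a maximal ideal of $T$. Then $R$ is integrally closed in $T$.
   Context: All rings are commutative with $1\neq0$ and subrings are unital. A maximal subring is a proper subring maximal with respect to inclusion among proper subrings. The conductor is $(R:T)=\{x\in T\mid Tx\subseteq R\}$. *)

theory Defs
  imports "HOL-Algebra.Algebra"
begin

definition maximal_subring :: "'a set \<Rightarrow> ('a, 'b) ring_scheme \<Rightarrow> bool" where
  "maximal_subring R T \<longleftrightarrow> subring R T \<and> R \<noteq> carrier T \<and>
     (\<forall>S. subring S T \<and> R \<subseteq> S \<and> S \<noteq> carrier T \<longrightarrow> S = R)"

definition conductor :: "'a set \<Rightarrow> ('a, 'b) ring_scheme \<Rightarrow> 'a set" where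
  "conductor R T = {x \<in> carrier T. \<forall>t \<in> carrier T. t \<otimes>\<^bsub>T\<^esub> x \<in> R}"

definition integral_over :: "'a set \<Rightarrow> ('a, 'b) ring_scheme \<Rightarrow> 'a \<Rightarrow> bool" where
  "integral_over R T x \<longleftrightarrow>
     (\<exists>p. polynomial\<^bsub>T\<^esub> R p \<and> p \<noteq> [] \<and> lead_coeff p = \<one>\<^bsub>T\<^esub> \<and> ring.eval T p x = \<zero>\<^bsub>T\<^esub>)"

definition integrally_closed :: "'a set \<Rightarrow> ('a, 'b) ring_scheme \<Rightarrow> bool" where
  "integrally_closed R T \<longleftrightarrow> (\<forall>x \<in> carrier T. integral_over R T x \<longrightarrow> x \<in> R)"

end

theory Submission
  imports Defs
begin

(* Suppose some x in T - R is integral over R, and let P = (R:T). In the domain D = T/P the image A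
   of R is a maximal subring with zero conductor, and the image of x lies outside A and is integral
   over A. Maximality gives D = A[x], so D is a finitely generated A-module. For 0 <> c in A the
   subring A + cD strictly contains A (otherwise c would lie in the conductor), hence D = A + cD, and
   a Nakayama argument gives s in A with (1 + cs)D contained in A. Then 1 + cs lies in the conductor,
   so 1 + cs = 0 and c is a unit of A. Thus A is a field, D = A[x] is a field because x is algebraic
   over A, and P is a maximal ideal of T, a contradiction. *)

lemma (in ring) set_add_mem_iff:
  "x \<in> A <+> B \<longleftrightarrow> (\<exists>a\<in>A. \<exists>b\<in>B. x = a \<oplus> b)"
  by (auto simp: set_add_def')

lemma (in ring) set_add_l_coset_mem_iff:
  "x \<in> L <+> (c <# M) \<longleftrightarrow> (\<exists>l\<in>L. \<exists>m\<in>M. x = l \<oplus> c \<otimes> m)"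
  by (auto simp: set_add_def' l_coset_def)

section \<open>Modules over a subring\<close>

lemma (in ring) line_extension_is_subalgebra:
  assumes A: "subring A R" and L: "subalgebra A L R" and g: "g \<in> carrier R"
  shows "subalgebra A (line_extension A g L) R"
proof -
  note Asub = subringE[OF A]
  interpret L: subalgebra A L R by (rule L)
  have Lc: "L \<subseteq> carrier R" using subalgebra_in_carrier[OF L] .
  show ?thesis
  proof (intro subalgebra.intro subalgebra_axioms.intro add.subgroupI)
    show "line_extension A g L \<subseteq> carrier R"
      using line_extension_in_carrier[OF Asub(1) g Lc] .
    have "\<zero> = \<zero> \<otimes> g \<oplus> \<zero>" using g by simp
    then have "\<zero> \<in> line_extension A g L"
      unfolding line_extension_mem_iff using Asub(2) L.one_closed by fastforce
    then show "line_extension A g L \<noteq> {}" by blast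
  next
    fix u v assume "u \<in> line_extension A g L" "v \<in> line_extension A g L"
    then obtain a l b m where u: "a \<in> A" "l \<in> L" "u = a \<otimes> g \<oplus> l"
      and v: "b \<in> A" "m \<in> L" "v = b \<otimes> g \<oplus> m"
      unfolding line_extension_mem_iff by blast
    have c: "a \<in> carrier R" "l \<in> carrier R" "b \<in> carrier R" "m \<in> carrier R"
      using u v Asub(1) Lc by auto
    have "u \<oplus> v = (a \<oplus> b) \<otimes> g \<oplus> (l \<oplus> m)" using u v c g by algebra
    then show "u \<oplus> v \<in> line_extension A g L"
      unfolding line_extension_mem_iff using u v Asub(7) L.m_closed by fastforce
    have "\<ominus> u = (\<ominus> a) \<otimes> g \<oplus> (\<ominus> l)" using u c g by algebra
    then show "\<ominus> u \<in> line_extension A g L"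
      unfolding line_extension_mem_iff using u Asub(5) L.m_inv_closed by (fastforce simp: a_inv_def)
  next
    fix k u assume k: "k \<in> A" and "u \<in> line_extension A g L"
    then obtain a l where u: "a \<in> A" "l \<in> L" "u = a \<otimes> g \<oplus> l"
      unfolding line_extension_mem_iff by blast
    have "k \<otimes> u = (k \<otimes> a) \<otimes> g \<oplus> k \<otimes> l"
      using u k Asub(1) Lc g by (simp add: subsetD r_distr m_assoc)
    then show "k \<otimes> u \<in> line_extension A g L"
      unfolding line_extension_mem_iff using u k Asub(6) L.smult_closed by fastforce
  qed
qed

lemma (in ring) Span_is_subalgebra_of_subring:
  assumes A: "subring A R" and gs: "set gs \<subseteq> carrier R"
  shows "subalgebra A (Span A gs) R"
  using gs
proof (induction gs)
  case Nil
  show ?case using ideal_is_subalgebra[OF subringE(1)[OF A] zeroideal] by simp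
next
  case (Cons g gs)
  then show ?case using line_extension_is_subalgebra[OF A] by simp
qed

lemma (in ring) combine_in_Span:
  assumes A: "subring A R" and "set ks \<subseteq> A" and "set gs \<subseteq> carrier R"
  shows "combine ks gs \<in> Span A gs"
  using assms(2,3)
proof (induction ks gs rule: combine.induct)
  case (1 k ks g gs)
  then show ?case by (auto simp: line_extension_mem_iff)
qed (use subalgebra.axioms(1)[OF Span_is_subalgebra_of_subring[OF A]] subgroup.one_closed in force)+

lemma (in cring) Nakayama_generator_step:
  assumes A: "subring A R" and c: "c \<in> A" and s: "s \<in> A" and L: "subalgebra A L R"
    and g: "g \<in> carrier R" and M0: "M0 \<subseteq> carrier R"
    and g_cover: "g \<in> L <+> (c <# line_extension A g M0)"
    and M0_cover: "(\<one> \<oplus> c \<otimes> s) <# M0 \<subseteq> line_extension A g L"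
  shows "\<exists>t\<in>A. (\<one> \<oplus> c \<otimes> t) \<otimes> g \<in> L"
proof -
  interpret L: subalgebra A L R by (rule L)
  note Asub = subringE[OF A]
  have Lc: "L \<subseteq> carrier R" using subalgebra_in_carrier[OF L] .
  define u where "u = \<one> \<oplus> c \<otimes> s"
  have u: "u \<in> A" unfolding u_def using Asub c s by simp
  obtain l k m where l: "l \<in> L" and k: "k \<in> A" and m: "m \<in> M0"
    and g_eq: "g = l \<oplus> c \<otimes> (k \<otimes> g \<oplus> m)"
    using g_cover by (auto simp: set_add_def' l_coset_def line_extension_mem_iff)
  have "u \<otimes> m \<in> line_extension A g L" using M0_cover m unfolding u_def by (auto simp: l_coset_def)
  then obtain e l' where e: "e \<in> A" and l': "l' \<in> L" and um_eq: "u \<otimes> m = e \<otimes> g \<oplus> l'"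
    unfolding line_extension_mem_iff by blast
  have carr: "c \<in> carrier R" "s \<in> carrier R" "k \<in> carrier R" "e \<in> carrier R"
    "m \<in> carrier R" "l \<in> carrier R" "l' \<in> carrier R"
    using c s k e m l l' Asub(1) M0 Lc by auto
  \<comment> \<open>Multiplying g = l + c(kg + m) by u and substituting um = eg + l' gives (u - cku - ce)g = ul + cl'.\<close>
  define t where "t = s \<ominus> k \<otimes> u \<ominus> e"
  have t: "t \<in> A" unfolding t_def a_minus_def using Asub c s k e u by simp
  have "g \<ominus> c \<otimes> (k \<otimes> g \<oplus> m) = (l \<oplus> c \<otimes> (k \<otimes> g \<oplus> m)) \<ominus> c \<otimes> (k \<otimes> g \<oplus> m)"
    using arg_cong[OF g_eq, of "\<lambda>z. z \<ominus> c \<otimes> (k \<otimes> g \<oplus> m)"] .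
  also have "\<dots> = l" using carr g by algebra
  finally have l_eq: "g \<ominus> c \<otimes> (k \<otimes> g \<oplus> m) = l" .
  have l'_eq: "u \<otimes> m \<ominus> e \<otimes> g = l'" using um_eq carr g by simp algebra
  have "(\<one> \<oplus> c \<otimes> t) \<otimes> g = u \<otimes> (g \<ominus> c \<otimes> (k \<otimes> g \<oplus> m)) \<oplus> c \<otimes> (u \<otimes> m \<ominus> e \<otimes> g)"
    unfolding t_def u_def using carr g by algebra
  also have "\<dots> = u \<otimes> l \<oplus> c \<otimes> l'" using l_eq l'_eq by simp
  finally have "(\<one> \<oplus> c \<otimes> t) \<otimes> g \<in> L" using L.smult_closed L.m_closed u c l l' by simp
  then show ?thesis using t by blast
qed

lemma (in cring) Nakayama_extension_step:
  assumes A: "subring A R" and L: "subalgebra A L R" and g: "g \<in> carrier R" and M0: "M0 \<subseteq> carrier R"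
    and u: "u \<in> A" and v: "v \<in> A" and vg: "v \<otimes> g \<in> L"
    and M0_cover: "u <# M0 \<subseteq> line_extension A g L"
  shows "(u \<otimes> v) <# line_extension A g M0 \<subseteq> L"
proof
  interpret L: subalgebra A L R by (rule L)
  note Asub = subringE[OF A]
  have Lc: "L \<subseteq> carrier R" using subalgebra_in_carrier[OF L] .
  fix y assume "y \<in> (u \<otimes> v) <# line_extension A g M0"
  then obtain k m where k: "k \<in> A" and m: "m \<in> M0" and y: "y = (u \<otimes> v) \<otimes> (k \<otimes> g \<oplus> m)"
    by (auto simp: l_coset_def line_extension_mem_iff)
  have "u \<otimes> m \<in> line_extension A g L" using M0_cover m by (auto simp: l_coset_def)
  then obtain e l where e: "e \<in> A" and l: "l \<in> L" and um_eq: "u \<otimes> m = e \<otimes> g \<oplus> l"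
    unfolding line_extension_mem_iff by blast
  have carr: "u \<in> carrier R" "v \<in> carrier R" "k \<in> carrier R" "e \<in> carrier R" "m \<in> carrier R" "l \<in> carrier R"
    using u v k e m l Asub(1) M0 Lc by auto
  have "y = (k \<otimes> u) \<otimes> (v \<otimes> g) \<oplus> v \<otimes> (u \<otimes> m)" using y carr g by simp algebra
  also have "\<dots> = (k \<otimes> u) \<otimes> (v \<otimes> g) \<oplus> (e \<otimes> (v \<otimes> g) \<oplus> v \<otimes> l)"
    using um_eq carr g by simp algebra
  finally show "y \<in> L" using L.smult_closed L.m_closed Asub(6) k u e v vg l by simp
qed

lemma (in cring) Span_Nakayama:
  assumes A: "subring A R" and c: "c \<in> A" and L: "subalgebra A L R" and gs: "set gs \<subseteq> carrier R"
    and cover: "Span A gs \<subseteq> L <+> (c <# Span A gs)"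
  shows "\<exists>s\<in>A. (\<one> \<oplus> c \<otimes> s) <# Span A gs \<subseteq> L"
  using L gs cover
proof (induction gs arbitrary: L)
  case Nil
  then have "\<zero> \<in> L" using subalgebra.axioms(1) subgroup.one_closed by fastforce
  then have "(\<one> \<oplus> c \<otimes> \<zero>) <# Span A [] \<subseteq> L"
    using c subringE(1)[OF A] by (auto simp: l_coset_def)
  then show ?case using subringE(2)[OF A] by blast
next
  case (Cons g gs L)
  note Asub = subringE[OF A]
  define M0 where "M0 = Span A gs"
  have g: "g \<in> carrier R" and gs: "set gs \<subseteq> carrier R" using Cons.prems(2) by auto
  have M0: "M0 \<subseteq> carrier R" unfolding M0_def using Span_in_carrier[OF Asub(1) gs] .
  have Span_Cons: "Span A (g # gs) = line_extension A g M0" by (simp add: M0_def)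
  have M0_sub: "M0 \<subseteq> Span A (g # gs)"
  proof
    fix m assume "m \<in> M0"
    moreover have "m = \<zero> \<otimes> g \<oplus> m" using calculation M0 g by auto
    ultimately show "m \<in> Span A (g # gs)"
      unfolding Span_Cons line_extension_mem_iff using Asub(2) by blast
  qed
  have g_in: "g \<in> Span A (g # gs)"
  proof -
    have "\<zero> \<in> M0"
      using Span_is_subalgebra_of_subring[OF A gs] subalgebra.axioms(1) subgroup.one_closed
      unfolding M0_def by fastforce
    moreover have "g = \<one> \<otimes> g \<oplus> \<zero>" using g by simp
    ultimately show ?thesis unfolding Span_Cons line_extension_mem_iff using Asub(3) by blast
  qed
  have L': "subalgebra A (line_extension A g L) R"
    using line_extension_is_subalgebra[OF A Cons.prems(1) g] .
  have "M0 \<subseteq> line_extension A g L <+> (c <# M0)"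
  proof
    fix m assume m: "m \<in> M0"
    then have "m \<in> L <+> (c <# Span A (g # gs))" using M0_sub Cons.prems(3) by blast
    then obtain l w where l: "l \<in> L" and w: "w \<in> Span A (g # gs)" and "m = l \<oplus> c \<otimes> w"
      unfolding set_add_l_coset_mem_iff by blast
    moreover obtain k m' where k: "k \<in> A" and m': "m' \<in> M0" and "w = k \<otimes> g \<oplus> m'"
      using w unfolding Span_Cons line_extension_mem_iff by blast
    ultimately have m_eq: "m = l \<oplus> c \<otimes> (k \<otimes> g \<oplus> m')" by simp
    have "l \<in> carrier R" "k \<in> carrier R" "m' \<in> carrier R" "c \<in> carrier R"
      using l k m' c M0 Asub(1) subalgebra_in_carrier[OF Cons.prems(1)] by auto
    then have "m = ((c \<otimes> k) \<otimes> g \<oplus> l) \<oplus> c \<otimes> m'" using m_eq g by simp algebra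
    moreover have "(c \<otimes> k) \<otimes> g \<oplus> l \<in> line_extension A g L"
      unfolding line_extension_mem_iff using Asub(6) c k l by blast
    ultimately show "m \<in> line_extension A g L <+> (c <# M0)"
      unfolding set_add_l_coset_mem_iff using m' by blast
  qed
  then obtain s where s: "s \<in> A" and M0_cover: "(\<one> \<oplus> c \<otimes> s) <# M0 \<subseteq> line_extension A g L"
    using Cons.IH[OF L' gs, folded M0_def] by blast
  have "g \<in> L <+> (c <# line_extension A g M0)" using Cons.prems(3) g_in unfolding Span_Cons by blast
  then obtain t where t: "t \<in> A" and vg: "(\<one> \<oplus> c \<otimes> t) \<otimes> g \<in> L"
    using Nakayama_generator_step[OF A c s Cons.prems(1) g M0 _ M0_cover] by blast
  have u: "\<one> \<oplus> c \<otimes> s \<in> A" and v: "\<one> \<oplus> c \<otimes> t \<in> A" using Asub c s t by simp_all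
  have "((\<one> \<oplus> c \<otimes> s) \<otimes> (\<one> \<oplus> c \<otimes> t)) <# Span A (g # gs) \<subseteq> L"
    unfolding Span_Cons by (rule Nakayama_extension_step[OF A Cons.prems(1) g M0 u v vg M0_cover])
  moreover have "(\<one> \<oplus> c \<otimes> s) \<otimes> (\<one> \<oplus> c \<otimes> t) = \<one> \<oplus> c \<otimes> (s \<oplus> t \<oplus> c \<otimes> s \<otimes> t)"
    using c s t Asub(1) by (simp add: subset_iff) algebra
  moreover have "s \<oplus> t \<oplus> c \<otimes> s \<otimes> t \<in> A" using Asub c s t by simp
  ultimately show ?case by (metis (no_types, lifting))
qed

lemma (in domain) simple_extension_of_integral_subset_Span:
  assumes A: "subring A R" and x: "x \<in> carrier R" and int: "integral_over A R x"
  shows "\<exists>n. simple_extension A x \<subseteq> Span A (exp_base x n)"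
proof -
  note Asub = subringE[OF A]
  obtain p where p: "polynomial A p" "p \<noteq> []" "lead_coeff p = \<one>" "eval p x = \<zero>"
    using int unfolding integral_over_def by auto
  have p_carr: "p \<in> carrier (A[X])" using p(1) univ_poly_carrier by blast
  have unit: "lead_coeff p \<in> Units (R \<lparr> carrier := A \<rparr>)"
    using p(3) monoid.Units_one_closed[OF ring.axioms(2)[OF subring_is_ring[OF A]]] by simp
  have "t \<in> Span A (exp_base x (degree p))" if t: "t \<in> simple_extension A x" for t
  proof -
    obtain q where q: "q \<in> carrier (A[X])" "t = eval q x"
      using t simple_extension_as_eval_img[OF Asub(1) x] by auto
    obtain q' r where qr: "polynomial A q'" "polynomial A r"
      "q = (p \<otimes>\<^bsub>A[X]\<^esub> q') \<oplus>\<^bsub>A[X]\<^esub> r" "r = [] \<or> degree r < degree p"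
      using long_division_theorem[OF A _ p(1,2) unit] q(1) univ_poly_carrier by blast
    have q'r: "q' \<in> carrier (A[X])" "r \<in> carrier (A[X])" using qr(1,2) univ_poly_carrier by blast+
    note hom = ring_hom_memE[OF eval_is_hom[OF A x]]
    have "t = eval p x \<otimes> eval q' x \<oplus> eval r x"
      using q(2) qr(3) hom(2,3) q'r p_carr by (metis ring.ring_simprules(5) univ_poly_is_ring[OF A])
    then have t_eq: "t = eval r x" using p(4) hom(1)[OF q'r(1)] hom(1)[OF q'r(2)] by simp
    have r_A: "set r \<subseteq> A" using qr(2) polynomial_incl by blast
    have len: "degree p - (degree p - length r) = length r" using qr(4) p(2) by auto
    have "combine (replicate (degree p - length r) \<zero> @ r) (exp_base x (degree p))
        = combine r (drop (degree p - length r) (exp_base x (degree p)))"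
      using combine_prepend_replicate[OF _ exp_base_closed[OF x]] r_A Asub(1) by (simp add: subset_trans)
    also have "\<dots> = combine r (exp_base x (length r))" by (simp only: drop_exp_base len)
    also have "\<dots> = t" using combine_eq_eval t_eq by simp
    finally have t_combine: "combine (replicate (degree p - length r) \<zero> @ r) (exp_base x (degree p)) = t" .
    have "set (replicate (degree p - length r) \<zero> @ r) \<subseteq> A" using r_A Asub(2) by auto
    from combine_in_Span[OF A this exp_base_closed[OF x, of "degree p"]] show ?thesis
      unfolding t_combine .
  qed
  then show ?thesis by blast
qed

section \<open>Maximal subrings and the conductor\<close>

lemma (in ring) subring_set_add_ideal:
  assumes A: "subring A R" and I: "ideal I R"
  shows "subring (A <+> I) R"
proof -
  note Asub = subringE[OF A]
  interpret I: ideal I R by (rule I)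
  note mem_iff = set_add_mem_iff
  show ?thesis
  proof (rule subringI)
    show "A <+> I \<subseteq> carrier R" using Asub(1) by (auto simp: set_add_def')
    have "\<one> = \<one> \<oplus> \<zero>" by simp
    then show "\<one> \<in> A <+> I" unfolding mem_iff using Asub(3) I.zero_closed by blast
  next
    fix y :: 'a assume "y \<in> A <+> I"
    then obtain a i where ai: "a \<in> A" "i \<in> I" "y = a \<oplus> i" unfolding mem_iff by blast
    then have "\<ominus> y = (\<ominus> a) \<oplus> (\<ominus> i)" using Asub(1) by (auto simp: minus_add)
    then show "\<ominus> y \<in> A <+> I" unfolding mem_iff using ai Asub(5) I.a_inv_closed by blast
  next
    fix y z :: 'a assume "y \<in> A <+> I" "z \<in> A <+> I"
    then obtain a i b j where ai: "a \<in> A" "i \<in> I" "y = a \<oplus> i" and bj: "b \<in> A" "j \<in> I" "z = b \<oplus> j"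
      unfolding mem_iff by blast
    have carr: "a \<in> carrier R" "b \<in> carrier R" "i \<in> carrier R" "j \<in> carrier R"
      using ai bj Asub(1) by auto
    have "y \<otimes> z = a \<otimes> b \<oplus> (a \<otimes> j \<oplus> i \<otimes> b \<oplus> i \<otimes> j)" unfolding ai(3) bj(3) using carr by algebra
    moreover have "a \<otimes> j \<oplus> i \<otimes> b \<oplus> i \<otimes> j \<in> I" using ai bj carr by (simp add: I.I_l_closed I.I_r_closed)
    ultimately show "y \<otimes> z \<in> A <+> I" unfolding mem_iff using ai bj Asub(6) by blast
    have "y \<oplus> z = (a \<oplus> b) \<oplus> (i \<oplus> j)" unfolding ai(3) bj(3) using carr by algebra
    then show "y \<oplus> z \<in> A <+> I" unfolding mem_iff using ai bj Asub(7) I.a_closed by blast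
  qed
qed

lemma (in ring) maximal_subring_set_add_ideal:
  assumes max: "maximal_subring A R" and I: "ideal I R" and not_sub: "\<not> I \<subseteq> A"
  shows "A <+> I = carrier R"
proof -
  have A: "subring A R" using max unfolding maximal_subring_def by blast
  have zero: "\<zero> \<in> A" "\<zero> \<in> I" using subringE(2)[OF A] additive_subgroup.zero_closed[OF ideal.axioms(1)[OF I]] by auto
  have "I \<subseteq> A <+> I"
  proof
    fix y assume "y \<in> I"
    moreover have "y = \<zero> \<oplus> y" using calculation ideal.Icarr[OF I] by simp
    ultimately show "y \<in> A <+> I" unfolding set_add_mem_iff using zero by blast
  qed
  moreover have "A \<subseteq> A <+> I"
  proof
    fix a assume "a \<in> A"
    moreover have "a = a \<oplus> \<zero>" using calculation subringE(1)[OF A] by auto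
    ultimately show "a \<in> A <+> I" unfolding set_add_mem_iff using zero by blast
  qed
  ultimately show ?thesis
    using max subring_set_add_ideal[OF A I] not_sub unfolding maximal_subring_def by blast
qed

lemma (in cring) l_coset_carrier_is_ideal:
  assumes c: "c \<in> carrier R" shows "ideal (c <# carrier R) R"
proof -
  have "PIdl c = c <# carrier R"
  proof (intro equalityI subsetI)
    fix y assume "y \<in> PIdl c"
    then obtain t where t: "t \<in> carrier R" and "y = t \<otimes> c" unfolding cgenideal_def by blast
    then have "y = c \<otimes> t" using m_comm[OF t c] by simp
    then show "y \<in> c <# carrier R" unfolding l_coset_def using t by blast
  next
    fix y assume "y \<in> c <# carrier R"
    then obtain t where t: "t \<in> carrier R" and "y = c \<otimes> t" unfolding l_coset_def by blast
    then have "y = t \<otimes> c" using m_comm[OF t c] by simp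
    then show "y \<in> PIdl c" unfolding cgenideal_def using t by blast
  qed
  then show ?thesis using cgenideal_ideal[OF c] by simp
qed

lemma (in cring) conductor_subset:
  assumes "subring A R" shows "conductor A R \<subseteq> A"
  unfolding conductor_def by (force dest: bspec[of _ _ "\<one>"])

lemma (in cring) mem_conductorI:
  assumes u: "u \<in> carrier R" and "u <# carrier R \<subseteq> A"
  shows "u \<in> conductor A R"
  unfolding conductor_def using assms m_comm[OF _ u] by (auto simp: l_coset_def)

lemma (in domain) maximal_subring_simple_extension:
  assumes max: "maximal_subring A R" and x: "x \<in> carrier R" "x \<notin> A"
  shows "simple_extension A x = carrier R"
proof -
  have A: "subring A R" using max unfolding maximal_subring_def by blast
  have "simple_extension A x \<noteq> A" using simple_extension_mem[OF A x(1)] x(2) by blast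
  then show ?thesis
    using max simple_extension_is_subring[OF A x(1)] simple_extension_incl[OF subringE(1)[OF A] x(1)]
    unfolding maximal_subring_def by blast
qed

lemma (in domain) subring_inverse_closed_imp_subfield:
  assumes K: "subring K R" and inv: "\<forall>k \<in> K - {\<zero>}. \<exists>k' \<in> K. k \<otimes> k' = \<one>"
  shows "subfield K R"
proof (rule subfieldI[OF subcringI'[OF K]])
  have Kc: "K \<subseteq> carrier R" using subringE(1)[OF K] .
  show "Units (R \<lparr> carrier := K \<rparr>) = K - {\<zero>}"
  proof
    show "Units (R \<lparr> carrier := K \<rparr>) \<subseteq> K - {\<zero>}"
      unfolding Units_def using Kc by auto
    show "K - {\<zero>} \<subseteq> Units (R \<lparr> carrier := K \<rparr>)"
    proof
      fix k assume k: "k \<in> K - {\<zero>}"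
      then obtain k' where k': "k' \<in> K" "k \<otimes> k' = \<one>" using inv by blast
      then have "k' \<otimes> k = \<one>" using k Kc m_comm by (metis DiffD1 subsetD)
      then show "k \<in> Units (R \<lparr> carrier := K \<rparr>)" unfolding Units_def using k k' by auto
    qed
  qed
qed

lemma (in domain) maximal_subring_trivial_conductor_subfield:
  assumes max: "maximal_subring A R" and cond: "conductor A R = {\<zero>}"
    and x: "x \<in> carrier R" "x \<notin> A" and int: "integral_over A R x"
  shows "subfield A R"
proof -
  have A: "subring A R" using max unfolding maximal_subring_def by blast
  note Asub = subringE[OF A]
  obtain n where "simple_extension A x \<subseteq> Span A (exp_base x n)"
    using simple_extension_of_integral_subset_Span[OF A x(1) int] by blast
  then have Span_eq: "Span A (exp_base x n) = carrier R"
    using maximal_subring_simple_extension[OF max x] Span_in_carrier[OF Asub(1) exp_base_closed[OF x(1)]]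
    by blast
  have A_subalgebra: "subalgebra A A R"
    using subring.axioms(1)[OF A] Asub(6) by (simp add: subalgebra_def subalgebra_axioms_def)
  show ?thesis
  proof (rule subring_inverse_closed_imp_subfield[OF A], intro ballI)
    fix c assume c: "c \<in> A - {\<zero>}"
    have cc: "c \<in> carrier R" using c Asub(1) by auto
    have "\<not> c <# carrier R \<subseteq> A"
    proof
      assume "c <# carrier R \<subseteq> A"
      then have "c \<in> conductor A R" using mem_conductorI[OF cc] by blast
      then show False using cond c by blast
    qed
    then have "A <+> (c <# carrier R) = carrier R"
      using maximal_subring_set_add_ideal[OF max l_coset_carrier_is_ideal[OF cc]] by blast
    then obtain s where s: "s \<in> A" and "(\<one> \<oplus> c \<otimes> s) <# carrier R \<subseteq> A"
      using Span_Nakayama[OF A _ A_subalgebra exp_base_closed[OF x(1)], of c n, unfolded Span_eq] c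
      by blast
    moreover have sc: "s \<in> carrier R" using s Asub(1) by blast
    ultimately have "\<one> \<oplus> c \<otimes> s \<in> conductor A R" using mem_conductorI[of "\<one> \<oplus> c \<otimes> s"] cc by blast
    then have "\<one> \<oplus> c \<otimes> s = \<zero>" using cond by blast
    moreover have "c \<otimes> (\<ominus> s) = \<one> \<ominus> (\<one> \<oplus> c \<otimes> s)" using sc cc by algebra
    ultimately have "c \<otimes> (\<ominus> s) = \<one>" by (simp add: a_minus_def)
    then show "\<exists>c' \<in> A. c \<otimes> c' = \<one>" using s Asub(5) by blast
  qed
qed

lemma (in domain) maximal_subring_trivial_conductor_field:
  assumes max: "maximal_subring A R" and cond: "conductor A R = {\<zero>}"
    and not_closed: "\<not> integrally_closed A R"
  shows "field R"
proof -
  obtain x where x: "x \<in> carrier R" "x \<notin> A" and int: "integral_over A R x"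
    using not_closed unfolding integrally_closed_def by blast
  obtain p where p: "polynomial A p" "p \<noteq> []" "eval p x = \<zero>"
    using int unfolding integral_over_def by blast
  have "(algebraic over A) x"
    using algebraicI p univ_poly_carrier by blast
  then have "subfield (carrier R) R"
    using simple_extension_is_subfield[OF maximal_subring_trivial_conductor_subfield[OF max cond x int] x(1)]
      maximal_subring_simple_extension[OF max x] by simp
  moreover have "Units (R \<lparr> carrier := carrier R \<rparr>) = Units R" by (simp add: Units_def)
  ultimately have "Units R = carrier R - {\<zero>}" using subfield.subfield_Units by metis
  then show ?thesis by (intro field.intro domain_axioms field_axioms.intro)
qed

section \<open>Passing to a quotient ring\<close>

lemma (in ring_hom_ring) image_mem_iff:
  assumes B: "subring B R" and ker: "a_kernel R S h \<subseteq> B" and a: "a \<in> carrier R"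
  shows "h a \<in> h ` B \<longleftrightarrow> a \<in> B"
proof
  assume "h a \<in> h ` B"
  then obtain b where b: "b \<in> B" "h a = h b" by auto
  then have "a \<in> a_kernel R S h +> b" using homeq_imp_rcos subringE(1)[OF B] a by blast
  then obtain k where "k \<in> a_kernel R S h" "a = k \<oplus> b" by (auto simp: a_r_coset_def')
  then show "a \<in> B" using ker b subringE(7)[OF B] by blast
qed blast

lemma (in ring_hom_ring) subring_vimage:
  assumes "subring T S" shows "subring {r \<in> carrier R. h r \<in> T} R"
  by (rule R.subringI) (auto simp: subringE[OF assms])

lemma (in ring_hom_ring) maximal_subring_image:
  assumes max: "maximal_subring B R" and ker: "a_kernel R S h \<subseteq> B"
    and surj: "h ` carrier R = carrier S"
  shows "maximal_subring (h ` B) S"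
proof -
  have B: "subring B R" and B_proper: "B \<noteq> carrier R"
    using max unfolding maximal_subring_def by blast+
  have "h ` B \<noteq> carrier S"
  proof
    assume image_full: "h ` B = carrier S"
    have "a \<in> B" if "a \<in> carrier R" for a
      using image_mem_iff[OF B ker that] hom_closed[OF that] image_full by simp
    then show False using B_proper subringE(1)[OF B] by blast
  qed
  moreover have "T = h ` B" if T: "subring T S" "h ` B \<subseteq> T" "T \<noteq> carrier S" for T
  proof -
    let ?V = "{r \<in> carrier R. h r \<in> T}"
    have "?V \<noteq> carrier R"
    proof
      assume "?V = carrier R"
      then have "h ` carrier R \<subseteq> T" by blast
      then show False using T(3) surj subringE(1)[OF T(1)] by simp
    qed
    moreover have "B \<subseteq> ?V" using T(2) subringE(1)[OF B] by blast
    ultimately have V: "?V = B" using max subring_vimage[OF T(1)] unfolding maximal_subring_def by blast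
    have "T \<subseteq> h ` B"
    proof
      fix y assume y: "y \<in> T"
      then obtain r where "r \<in> carrier R" "y = h r" using surj subringE(1)[OF T(1)] by blast
      then show "y \<in> h ` B" using y V by blast
    qed
    then show ?thesis using T(2) by blast
  qed
  ultimately show ?thesis unfolding maximal_subring_def using img_is_subring[OF B] by blast
qed

lemma (in ring_hom_ring) conductor_image:
  assumes B: "subring B R" and ker: "a_kernel R S h \<subseteq> B"
    and surj: "h ` carrier R = carrier S"
  shows "conductor (h ` B) S = h ` conductor B R"
proof (intro equalityI subsetI)
  fix y assume y: "y \<in> conductor (h ` B) S"
  then obtain a where a: "a \<in> carrier R" and y_eq: "y = h a" using surj unfolding conductor_def by blast
  have "t \<otimes> a \<in> B" if t: "t \<in> carrier R" for t
  proof -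
    have "h t \<otimes>\<^bsub>S\<^esub> y \<in> h ` B" using y hom_closed[OF t] unfolding conductor_def by blast
    moreover have "h (t \<otimes> a) = h t \<otimes>\<^bsub>S\<^esub> y" using hom_mult[OF t a] y_eq by simp
    ultimately have "h (t \<otimes> a) \<in> h ` B" by (simp only:)
    then show ?thesis using image_mem_iff[OF B ker R.m_closed[OF t a]] by blast
  qed
  then have "a \<in> conductor B R" using a unfolding conductor_def by blast
  then show "y \<in> h ` conductor B R" using y_eq by blast
next
  fix y assume "y \<in> h ` conductor B R"
  then obtain a where a: "a \<in> carrier R" and a_cond: "\<forall>t \<in> carrier R. t \<otimes> a \<in> B" and y_eq: "y = h a"
    unfolding conductor_def by blast
  have "s \<otimes>\<^bsub>S\<^esub> y \<in> h ` B" if "s \<in> carrier S" for s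
  proof -
    have "s \<in> h ` carrier R" using that surj by simp
    then obtain t where t: "t \<in> carrier R" "s = h t" by blast
    then have "s \<otimes>\<^bsub>S\<^esub> y = h (t \<otimes> a)" using a y_eq by simp
    then show ?thesis using a_cond t(1) by blast
  qed
  then show "y \<in> conductor (h ` B) S" using a y_eq unfolding conductor_def by simp
qed

lemma (in ring_hom_ring) integral_over_image:
  assumes B: "subring B R" and nontrivial: "\<one>\<^bsub>S\<^esub> \<noteq> \<zero>\<^bsub>S\<^esub>"
    and x: "x \<in> carrier R" and int: "integral_over B R x"
  shows "integral_over (h ` B) S (h x)"
proof -
  obtain p where p: "polynomial\<^bsub>R\<^esub> B p" "p \<noteq> []" "lead_coeff p = \<one>" "R.eval p x = \<zero>"
    using int unfolding integral_over_def by blast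
  have pB: "set p \<subseteq> B" using R.polynomial_incl[OF p(1)] .
  have pc: "set p \<subseteq> carrier R" using pB subringE(1)[OF B] by blast
  have lead: "lead_coeff (map h p) = \<one>\<^bsub>S\<^esub>" using p(2,3) by (cases p) auto
  have "polynomial\<^bsub>S\<^esub> (h ` B) (map h p)"
    unfolding polynomial_def using pB lead nontrivial by auto
  moreover have "eval (map h p) (h x) = \<zero>\<^bsub>S\<^esub>"
    using eval_hom'[OF x pc] p(4) by simp
  ultimately show ?thesis unfolding integral_over_def using p(2) lead by auto
qed

lemma (in ring_hom_ring) integrally_closed_of_image:
  assumes B: "subring B R" and ker: "a_kernel R S h \<subseteq> B" and nontrivial: "\<one>\<^bsub>S\<^esub> \<noteq> \<zero>\<^bsub>S\<^esub>"
    and closed: "integrally_closed (h ` B) S"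
  shows "integrally_closed B R"
  unfolding integrally_closed_def
proof (intro ballI impI)
  fix x assume x: "x \<in> carrier R" and "integral_over B R x"
  then have "integral_over (h ` B) S (h x)" by (rule integral_over_image[OF B nontrivial])
  then have "h x \<in> h ` B" using closed hom_closed[OF x] unfolding integrally_closed_def by blast
  then show "x \<in> B" using image_mem_iff[OF B ker x] by simp
qed

lemma (in ideal) a_kernel_rcos: "a_kernel R (R Quot I) ((+>) I) = I"
proof (intro equalityI subsetI)
  fix x assume "x \<in> a_kernel R (R Quot I) ((+>) I)"
  then have "x \<in> carrier R" "I +> x = I" unfolding a_kernel_def' FactRing_def by simp_all
  then show "x \<in> I" by (rule rcos_const_imp_mem)
next
  fix x assume "x \<in> I"
  then show "x \<in> a_kernel R (R Quot I) ((+>) I)"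
    unfolding a_kernel_def' FactRing_def using a_rcos_zero[OF is_ideal] by simp
qed

lemma (in ideal) rcos_image_carrier: "(+>) I ` carrier R = carrier (R Quot I)"
  unfolding FactRing_def A_RCOSETS_def' by auto

lemma (in ideal) rcos_image_self: "(+>) I ` I = {\<zero>\<^bsub>R Quot I\<^esub>}"
proof (intro equalityI subsetI)
  fix C assume "C \<in> (+>) I ` I"
  then obtain i where "i \<in> I" "C = I +> i" by blast
  then show "C \<in> {\<zero>\<^bsub>R Quot I\<^esub>}" using a_rcos_zero[OF is_ideal] by (simp add: FactRing_def)
next
  fix C assume "C \<in> {\<zero>\<^bsub>R Quot I\<^esub>}"
  then have "C = I +> \<zero>" using a_rcos_zero[OF is_ideal, of "\<zero>"] by (simp add: FactRing_def)
  then show "C \<in> (+>) I ` I" by simp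
qed

lemma (in cring) quotient_field_imp_maximalideal:
  assumes I: "ideal I R" and field: "field (R Quot I)"
  shows "maximalideal I R"
proof (rule maximalidealI[OF I])
  interpret Q: field "R Quot I" by (rule field)
  interpret I: ideal I R by (rule I)
  show "carrier R \<noteq> I"
  proof
    assume "carrier R = I"
    then have "\<one> \<in> I" using one_closed by simp
    then have "\<one>\<^bsub>R Quot I\<^esub> = \<zero>\<^bsub>R Quot I\<^esub>" using a_rcos_zero[OF I] by (simp add: FactRing_def)
    then show False by simp
  qed
  fix J assume J: "ideal J R" "I \<subseteq> J" "J \<subseteq> carrier R"
  have "(+>) I ` J \<in> {K. ideal K (R Quot I)}" using ring_ideal_imp_quot_ideal[OF I J(1)] by simp
  then have "(+>) I ` J \<in> {(+>) I ` I, (+>) I ` carrier R}"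
    unfolding Q.all_ideals I.rcos_image_self I.rcos_image_carrier .
  moreover have "inj_on (\<lambda>J. (+>) I ` J) {J. ideal J R \<and> I \<subseteq> J}"
    using quot_ideal_correspondence[OF I] by (rule bij_betw_imp_inj_on)
  moreover have "I \<in> {J. ideal J R \<and> I \<subseteq> J}" using I by simp
  moreover have "carrier R \<in> {J. ideal J R \<and> I \<subseteq> J}" using oneideal I.a_subset by simp
  moreover have "J \<in> {J. ideal J R \<and> I \<subseteq> J}" using J by simp
  ultimately show "J = I \<or> J = carrier R" by (auto dest: inj_onD)
qed

theorem lemma3p1:
  fixes T :: "('a, 'b) ring_scheme" and R :: "'a set"
  assumes "cring T"
    and "\<one>\<^bsub>T\<^esub> \<noteq> \<zero>\<^bsub>T\<^esub>"
    and "maximal_subring R T"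
    and "primeideal (conductor R T) T"
    and "\<not> maximalideal (conductor R T) T"
  shows "integrally_closed R T"
proof -
  interpret cring T by (rule assms(1))
  define P where "P = conductor R T"
  interpret P: primeideal P T using assms(4) unfolding P_def .
  interpret h: ring_hom_ring T "T Quot P" "(+>\<^bsub>T\<^esub>) P" by (rule P.rcos_ring_hom_ring)
  interpret Q: domain "T Quot P" by (rule P.quotient_is_domain)
  have R: "subring R T" using assms(3) unfolding maximal_subring_def by blast
  have ker: "a_kernel T (T Quot P) ((+>\<^bsub>T\<^esub>) P) \<subseteq> R"
    using P.a_kernel_rcos conductor_subset[OF R] unfolding P_def by simp
  have max: "maximal_subring ((+>\<^bsub>T\<^esub>) P ` R) (T Quot P)"
    using h.maximal_subring_image[OF assms(3) ker P.rcos_image_carrier] .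
  have cond: "conductor ((+>\<^bsub>T\<^esub>) P ` R) (T Quot P) = {\<zero>\<^bsub>T Quot P\<^esub>}"
    using h.conductor_image[OF R ker P.rcos_image_carrier] P.rcos_image_self unfolding P_def by simp
  show ?thesis
  proof (rule ccontr)
    assume "\<not> integrally_closed R T"
    then have "\<not> integrally_closed ((+>\<^bsub>T\<^esub>) P ` R) (T Quot P)"
      using h.integrally_closed_of_image[OF R ker Q.one_not_zero] by blast
    then have "field (T Quot P)" using Q.maximal_subring_trivial_conductor_field[OF max cond] by blast
    then have "maximalideal P T" using quotient_field_imp_maximalideal[OF P.is_ideal] by blast
    then show False using assms(5) unfolding P_def by blast
  qed
qed

end
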